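(* Let $k\ge 2$ be an integer, and let $G$ be the graph obtained from two disjoint copies of the helm $H_4$ and a path $u_1u_2\cdots u_k$ (of length $k-1$) by identifying $u_1$ with the apex vertex of the first copy of $H_4$ and $u_k$ with the apex vertex of the second copy of $H_4$. Then $G$ admits a signed product cordial labeling.
   Context: A graph $G$ is signed product cordial if there is a vertex labeling $\alpha: V(G)\to\{1,-1\}$ such that, with the induced edge labeling $\alpha^*(uv)=\alpha(u)\alpha(v)$, we have $|v_\alpha(-1)-v_\alpha(1)|\le 1$ and $|e_{\alpha^*}(-1)-e_{\alpha^*}(1)|\le 1$. Here $v_\alpha(x)$ is the number of vertices labeled $x$ and $e_{\alpha^*}(x)$ is the number of edges labeled $x$; such an $\alpha$ is called a signed product cordial labeling. The wheel $W_n$ consists of a cycle $C_n$ (the rim) together with an apex vertex adjacent to every rim vertex. The helm $H_n$ ($n\ge 3$) is obtained from $W_n$ by attaching a pendant edge at each rim vertex. Thus $H_4$ has an apex $v_0$, rim vertices $v_1,\dots,v_4$ forming a $4$-cycle, each adjacent to $v_0$, and pendant vertices $v_1',\dots,v_4'$ with $v_i'$ adjacent only to $v_i$. *)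

theory Defs
  imports Main
begin

text \<open>A simple graph is given by a vertex set V and an edge set E of 2-element vertex sets.
  The induced edge label of e = {u,v} is the product of the labels of u and v.\<close>

definition signed_product_cordial_labeling :: "'a set \<Rightarrow> 'a set set \<Rightarrow> ('a \<Rightarrow> int) \<Rightarrow> bool" where
  "signed_product_cordial_labeling V E \<alpha> \<longleftrightarrow>
     (\<forall>v\<in>V. \<alpha> v \<in> {1, -1}) \<and>
     \<bar>int (card {v\<in>V. \<alpha> v = -1}) - int (card {v\<in>V. \<alpha> v = 1})\<bar> \<le> 1 \<and>
     \<bar>int (card {e\<in>E. (\<Prod>v\<in>e. \<alpha> v) = -1}) - int (card {e\<in>E. (\<Prod>v\<in>e. \<alpha> v) = 1})\<bar> \<le> 1"

definition signed_product_cordial :: "'a set \<Rightarrow> 'a set set \<Rightarrow> bool" where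
  "signed_product_cordial V E \<longleftrightarrow> (\<exists>\<alpha>. signed_product_cordial_labeling V E \<alpha>)"

text \<open>Vertices of the graph: Path j (j = 1..k) is the path vertex u_j; u_1 is the apex of
  copy 1 of H_4 and u_k the apex of copy 2. Rim c i and Pend c i (c = 1,2; i = 1..4) are
  the rim and pendant vertices of copy c.\<close>

datatype gv = Path nat | Rim nat nat | Pend nat nat

definition apex :: "nat \<Rightarrow> nat \<Rightarrow> gv" where
  "apex k c = (if c = 1 then Path 1 else Path k)"

definition two_helms_path_V :: "nat \<Rightarrow> gv set" where
  "two_helms_path_V k = Path ` {1..k} \<union> {Rim c i | c i. c \<in> {1,2} \<and> i \<in> {1..4}}
      \<union> {Pend c i | c i. c \<in> {1,2} \<and> i \<in> {1..4}}"

definition two_helms_path_E :: "nat \<Rightarrow> gv set set" where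
  "two_helms_path_E k =
      {{Rim c i, Rim c (i mod 4 + 1)} | c i. c \<in> {1,2} \<and> i \<in> {1..4}}
    \<union> {{apex k c, Rim c i} | c i. c \<in> {1,2} \<and> i \<in> {1..4}}
    \<union> {{Rim c i, Pend c i} | c i. c \<in> {1,2} \<and> i \<in> {1..4}}
    \<union> {{Path j, Path (j + 1)} | j. j \<in> {1..<k}}"

end

theory Submission
  imports Defs
begin

text \<open>Counting labels amounts to summing them: for a labeling by \<open>\<plusminus>1\<close>, the difference
  between the numbers of \<open>-1\<close>'s and \<open>1\<close>'s is minus the sum of the labels, and sums are additive
  over disjoint unions. Label the path vertex \<open>u\<^sub>j\<close> by \<open>(-1)\<^bsup>\<lfloor>j/2\<rfloor>\<^esup>\<close>, i.e. periodically
  \<open>+,-,-,+\<close>: the partial sums of these labels lie in \<open>{-1,0,1}\<close>, and the edge \<open>u\<^sub>ju\<^sub>j\<^sub>+\<^sub>1\<close>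
  gets \<open>(-1)\<^sup>j\<close>, whose partial sums lie in \<open>{-1,0}\<close>. In each helm label the rim \<open>+,+,-,-\<close> and
  the pendants \<open>+,-,+,-\<close>: then its eight non-apex vertices, its rim edges, its pendant edges
  and (whatever the apex label) its spokes all have label sum zero.\<close>

lemma card_minus_card_eq_neg_sum:
  fixes f :: "'a \<Rightarrow> int"
  assumes "finite A" and "\<forall>x\<in>A. f x \<in> {1, -1}"
  shows "int (card {x\<in>A. f x = -1}) - int (card {x\<in>A. f x = 1}) = - (\<Sum>x\<in>A. f x)"
proof -
  have "(\<Sum>x\<in>A. f x) = (\<Sum>x\<in>A. of_bool (f x = 1) - of_bool (f x = -1))"
    using assms(2) by (intro sum.cong) auto
  also have "\<dots> = int (card {x\<in>A. f x = 1}) - int (card {x\<in>A. f x = -1})"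
    using assms(1) by (simp add: sum_subtractf Int_def)
  finally show ?thesis by simp
qed

lemma prod_in_signs:
  fixes f :: "'a \<Rightarrow> int"
  assumes "\<forall>x\<in>A. f x \<in> {1, -1}"
  shows "(\<Prod>x\<in>A. f x) \<in> {1, -1}"
proof (cases "finite A")
  case True
  then show ?thesis
    using assms by (induction A rule: finite_induct) auto
next
  case False
  then show ?thesis by simp
qed

lemma sum_neg_one_power_div_two:
  "(\<Sum>j=1..k. (-1::int) ^ (j div 2)) = (-1) ^ (k div 2) * int (k mod 2)"
proof (induction k)
  case 0
  then show ?case by simp
next
  case (Suc k)
  then show ?case by (cases "even k") (simp_all add: mod_Suc odd_iff_mod_2_eq_one)
qed

lemma sum_neg_one_power_one_lessThan:
  assumes "1 \<le> k"
  shows "(\<Sum>j=1..<k. (-1::int) ^ j) = int (k mod 2) - 1"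
  using assms
proof (induction k rule: nat_induct_at_least)
  case base
  then show ?case by simp
next
  case (Suc k)
  then show ?case
    by (cases "even k") (simp_all add: sum.atLeastLessThan_Suc mod_Suc odd_iff_mod_2_eq_one)
qed

lemma signed_product_cordial_labeling_iff_sums:
  fixes \<alpha> :: "'a \<Rightarrow> int"
  assumes "finite V" and "finite E" and "\<forall>e\<in>E. e \<subseteq> V" and "\<forall>v\<in>V. \<alpha> v \<in> {1, -1}"
  shows "signed_product_cordial_labeling V E \<alpha> \<longleftrightarrow>
    \<bar>\<Sum>v\<in>V. \<alpha> v\<bar> \<le> 1 \<and> \<bar>\<Sum>e\<in>E. \<Prod>v\<in>e. \<alpha> v\<bar> \<le> 1"
proof -
  have "\<forall>e\<in>E. (\<Prod>v\<in>e. \<alpha> v) \<in> {1, -1}"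
  proof
    fix e
    assume "e \<in> E"
    with assms(3,4) have "\<forall>v\<in>e. \<alpha> v \<in> {1, -1}" by blast
    then show "(\<Prod>v\<in>e. \<alpha> v) \<in> {1, -1}" by (rule prod_in_signs)
  qed
  then have "int (card {e\<in>E. (\<Prod>v\<in>e. \<alpha> v) = -1}) - int (card {e\<in>E. (\<Prod>v\<in>e. \<alpha> v) = 1})
      = - (\<Sum>e\<in>E. \<Prod>v\<in>e. \<alpha> v)"
    using assms(2) by (rule card_minus_card_eq_neg_sum[rotated])
  moreover have "int (card {v\<in>V. \<alpha> v = -1}) - int (card {v\<in>V. \<alpha> v = 1}) = - (\<Sum>v\<in>V. \<alpha> v)"
    using assms(1,4) by (rule card_minus_card_eq_neg_sum)
  ultimately show ?thesis
    using assms(4) unfolding signed_product_cordial_labeling_def by simp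
qed

fun two_helms_path_label :: "gv \<Rightarrow> int" where
  "two_helms_path_label (Path j) = (-1) ^ (j div 2)"
| "two_helms_path_label (Rim c i) = (if i \<le> 2 then 1 else -1)"
| "two_helms_path_label (Pend c i) = (if odd i then 1 else -1)"

lemma Collect_pair_index_eq: "{f c i | c i. c \<in> C \<and> i \<in> I} = (\<Union>c\<in>C. f c ` I)"
  by blast

definition helm4_vertices :: "nat \<Rightarrow> gv set" where
  "helm4_vertices c = Rim c ` {1..4} \<union> Pend c ` {1..4}"

definition helm4_edges :: "gv \<Rightarrow> nat \<Rightarrow> gv set set" where
  "helm4_edges a c = (\<lambda>i. {Rim c i, Rim c (i mod 4 + 1)}) ` {1..4}
     \<union> (\<lambda>i. {a, Rim c i}) ` {1..4} \<union> (\<lambda>i. {Rim c i, Pend c i}) ` {1..4}"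

definition path_edges :: "nat \<Rightarrow> gv set set" where
  "path_edges k = (\<lambda>j. {Path j, Path (j + 1)}) ` {1..<k}"

lemma two_helms_path_V_eq:
  "two_helms_path_V k = Path ` {1..k} \<union> helm4_vertices 1 \<union> helm4_vertices 2"
  unfolding two_helms_path_V_def helm4_vertices_def Collect_pair_index_eq by auto

lemma two_helms_path_E_eq:
  "two_helms_path_E k = helm4_edges (Path 1) 1 \<union> helm4_edges (Path k) 2 \<union> path_edges k"
  unfolding two_helms_path_E_def helm4_edges_def path_edges_def Collect_pair_index_eq
    Setcompr_eq_image
  by (auto simp: apex_def)

lemma sum_label_helm4_vertices: "(\<Sum>v\<in>helm4_vertices c. two_helms_path_label v) = 0"
proof -
  have "{1..4::nat} = {1, 2, 3, 4}" by auto
  then show ?thesis unfolding helm4_vertices_def by simp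
qed

lemma sum_edge_label_helm4_edges:
  "(\<Sum>e\<in>helm4_edges (Path j) c. \<Prod>v\<in>e. two_helms_path_label v) = 0"
proof -
  have "{1..4::nat} = {1, 2, 3, 4}" by auto
  then show ?thesis unfolding helm4_edges_def by (simp add: doubleton_eq_iff)
qed

lemma sum_label_Path:
  "(\<Sum>v\<in>Path ` A. two_helms_path_label v) = (\<Sum>j\<in>A. (-1) ^ (j div 2))"
  by (simp add: sum.reindex inj_on_def)

lemma sum_edge_label_path_edges:
  "(\<Sum>e\<in>path_edges k. \<Prod>v\<in>e. two_helms_path_label v) = (\<Sum>j=1..<k. (-1) ^ j)"
proof -
  have "inj_on (\<lambda>j. {Path j, Path (j + 1)}) {1..<k}"
    by (auto simp: inj_on_def doubleton_eq_iff)
  moreover have "(\<Prod>v\<in>{Path j, Path (j + 1)}. two_helms_path_label v) = (-1) ^ j" for j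
  proof -
    have "j div 2 + Suc j div 2 = j" by presburger
    then show ?thesis by (simp flip: power_add)
  qed
  ultimately show ?thesis
    unfolding path_edges_def by (simp add: sum.reindex)
qed

lemma sum_label_two_helms_path_V:
  "(\<Sum>v\<in>two_helms_path_V k. two_helms_path_label v) = (\<Sum>j=1..k. (-1) ^ (j div 2))"
proof -
  have "finite (helm4_vertices c)" for c by (simp add: helm4_vertices_def)
  moreover have "Path ` {1..k} \<inter> helm4_vertices c = {}" for c by (auto simp: helm4_vertices_def)
  moreover have "helm4_vertices 1 \<inter> helm4_vertices 2 = {}" by (auto simp: helm4_vertices_def)
  ultimately show ?thesis
    unfolding two_helms_path_V_eq
    by (simp add: sum.union_disjoint Int_Un_distrib2 sum_label_Path sum_label_helm4_vertices)
qed

lemma helm4_edge_cases: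
  assumes "e \<in> helm4_edges a c"
  shows "e \<subseteq> insert a (helm4_vertices c)" and "\<exists>i. Rim c i \<in> e"
  using assms by (auto simp: helm4_edges_def helm4_vertices_def)

lemma helm4_edges_disjoint_path_edges: "helm4_edges (Path j) c \<inter> path_edges k = {}"
proof -
  have "e \<subseteq> range Path" if "e \<in> path_edges k" for e
    using that by (auto simp: path_edges_def)
  then show ?thesis
    using helm4_edge_cases(2) by blast
qed

lemma helm4_edges_disjoint: "helm4_edges (Path i) 1 \<inter> helm4_edges (Path j) 2 = {}"
proof -
  have "Rim 1 m \<notin> insert (Path j) (helm4_vertices 2)" for m
    by (auto simp: helm4_vertices_def)
  then show ?thesis
    using helm4_edge_cases by blast
qed

lemma sum_edge_label_two_helms_path_E:
  "(\<Sum>e\<in>two_helms_path_E k. \<Prod>v\<in>e. two_helms_path_label v) = (\<Sum>j=1..<k. (-1) ^ j)"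
proof -
  let ?w = "\<lambda>e. \<Prod>v\<in>e. two_helms_path_label v"
  have fin: "finite (helm4_edges a c)" for a c by (simp add: helm4_edges_def)
  have "finite (path_edges k)" by (simp add: path_edges_def)
  moreover have "(helm4_edges (Path 1) 1 \<union> helm4_edges (Path k) 2) \<inter> path_edges k = {}"
    using helm4_edges_disjoint_path_edges by blast
  ultimately have "sum ?w (two_helms_path_E k)
      = sum ?w (helm4_edges (Path 1) 1 \<union> helm4_edges (Path k) 2) + sum ?w (path_edges k)"
    unfolding two_helms_path_E_eq by (intro sum.union_disjoint finite_UnI fin)
  also have "sum ?w (helm4_edges (Path 1) 1 \<union> helm4_edges (Path k) 2)
      = sum ?w (helm4_edges (Path 1) 1) + sum ?w (helm4_edges (Path k) 2)"
    by (intro sum.union_disjoint fin helm4_edges_disjoint)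
  finally show ?thesis
    by (simp only: sum_edge_label_helm4_edges sum_edge_label_path_edges add_0)
qed

theorem theorem2p4:
  fixes k :: nat
  assumes "k \<ge> 2"
  shows "signed_product_cordial (two_helms_path_V k) (two_helms_path_E k)"
proof -
  let ?V = "two_helms_path_V k" and ?E = "two_helms_path_E k" and ?\<alpha> = two_helms_path_label
  have "finite ?V" by (simp add: two_helms_path_V_eq helm4_vertices_def)
  moreover have "finite ?E" by (simp add: two_helms_path_E_eq helm4_edges_def path_edges_def)
  moreover have "\<forall>e\<in>?E. e \<subseteq> ?V"
    using assms
    by (auto simp: two_helms_path_E_eq two_helms_path_V_eq helm4_edges_def helm4_vertices_def
        path_edges_def)
  moreover have "\<forall>v\<in>?V. ?\<alpha> v \<in> {1, -1}"
  proof
    fix v show "?\<alpha> v \<in> {1, -1}" by (cases v) (auto simp: minus_one_power_iff)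
  qed
  moreover have "\<bar>\<Sum>v\<in>?V. ?\<alpha> v\<bar> \<le> 1"
    unfolding sum_label_two_helms_path_V sum_neg_one_power_div_two by (simp add: abs_mult)
  moreover have "\<bar>\<Sum>e\<in>?E. \<Prod>v\<in>e. ?\<alpha> v\<bar> \<le> 1"
    using assms unfolding sum_edge_label_two_helms_path_E
    by (subst sum_neg_one_power_one_lessThan) simp_all
  ultimately have "signed_product_cordial_labeling ?V ?E ?\<alpha>"
    by (simp add: signed_product_cordial_labeling_iff_sums)
  then show ?thesis
    unfolding signed_product_cordial_def by blast
qed

end
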